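(* Let $n,p\in\mathbb{N}$, $0\le\lambda\le1$. Let $f$ be analytic in $\mathrm{U}=\{|z|<1\}$ of the form $f(z)=z^p+\sum_{k=p+n}^\infty a_kz^k$, put $\mathcal{F}_\lambda(z)=(1-\lambda)f(z)+\lambda zf'(z)$, and assume $\mathcal{F}_\lambda(z)\mathcal{F}_\lambda'(z)\neq0$ for all $z\in\mathrm{U}\setminus\{0\}$. Let $M\ge p$. If $$\operatorname{Re}\left[-\frac{z\mathcal{F}_\lambda'(z)}{\mathcal{F}_\lambda(z)}+1+\frac{z\mathcal{F}_\lambda''(z)}{\mathcal{F}_\lambda'(z)}\right]<\frac{nM}{M+p},\quad z\in\mathrm{U},$$ then $$\left|\frac{z\mathcal{F}_\lambda'(z)}{\mathcal{F}_\lambda(z)}-p\right|<M,\quad z\in\mathrm{U}.$$ *)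

theory Defs
  imports "HOL-Analysis.Analysis"
begin

definition Flam :: "real \<Rightarrow> (complex \<Rightarrow> complex) \<Rightarrow> complex \<Rightarrow> complex" where
  "Flam lam f z = (1 - complex_of_real lam) * f z + complex_of_real lam * z * deriv f z"

end

theory Submission
  imports Defs "HOL-Complex_Analysis.Complex_Analysis"
begin

text \<open>
  Write \<open>Q = z F\<^sub>\<lambda>'/F\<^sub>\<lambda>\<close>. The power series form of \<open>f\<close> makes \<open>F\<^sub>\<lambda> = z\<^sup>p (c + z\<^sup>n K)\<close> with
  \<open>c = 1 - \<lambda> + \<lambda>p \<noteq> 0\<close>, so \<open>w = (Q - p)/M\<close> is holomorphic with a zero of order at least \<open>n\<close>
  at the origin. If \<open>|w| < 1\<close> failed somewhere, Jack's lemma would give a point \<open>z\<^sub>0\<close> with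
  \<open>|w(z\<^sub>0)| = 1\<close> and \<open>z\<^sub>0 w'(z\<^sub>0) = m w(z\<^sub>0)\<close>, \<open>m \<ge> n\<close>. Since the bracketed expression in the
  hypothesis equals \<open>z Q'/Q\<close>, its value at \<open>z\<^sub>0\<close> is \<open>M m W/(p + M W)\<close> with \<open>|W| = 1\<close>, whose
  real part is at least \<open>n M/(M + p)\<close> because \<open>M \<ge> p\<close> -- contradicting the hypothesis.
\<close>

lemma power_series_tail_factor:
  fixes a :: "nat \<Rightarrow> complex" and g :: "complex \<Rightarrow> complex"
  assumes "\<forall>z\<in>ball 0 R. (\<lambda>k. if k \<ge> N then a k * z ^ k else 0) sums g z"
  obtains h where "h holomorphic_on ball 0 R" "\<forall>z\<in>ball 0 R. g z = z ^ N * h z"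
proof
  define h where "h z = (\<Sum>j. a (j + N) * z ^ j)" for z
  have tail: "(\<lambda>j. z ^ N * (a (j + N) * z ^ j)) sums g z" if "z \<in> ball 0 R" for z
    using assms that sums_iff_shift[of "\<lambda>k. if k \<ge> N then a k * z ^ k else 0" N]
    by (simp add: power_add algebra_simps)
  have sums_h: "(\<lambda>j. a (j + N) * z ^ j) sums h z" if "z \<in> ball 0 R" for z
  proof (cases "z = 0")
    case True
    show ?thesis using powser_sums_zero[of "\<lambda>j. a (j + N)"] True unfolding h_def
      by (simp add: sums_iff)
  next
    case False
    have "summable (\<lambda>j. z ^ N * (a (j + N) * z ^ j))" using tail[OF that] by (simp add: sums_iff)
    hence "summable (\<lambda>j. inverse (z ^ N) * (z ^ N * (a (j + N) * z ^ j)))"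
      by (rule summable_mult)
    hence "summable (\<lambda>j. a (j + N) * z ^ j)" using False by simp
    thus ?thesis unfolding h_def by (simp add: summable_sums)
  qed
  show "h holomorphic_on ball 0 R"
    by (rule power_series_holomorphic[where a = "\<lambda>j. a (j + N)"]) (use sums_h in auto)
  show "\<forall>z\<in>ball 0 R. g z = z ^ N * h z"
    using tail sums_unique2 sums_mult[OF sums_h] by blast
qed

lemma mult_of_nat_power_pred:
  fixes z :: "'a :: comm_semiring_1"
  shows "z * (of_nat n * z ^ (n - 1)) = of_nat n * z ^ n"
  by (cases n) (simp_all add: algebra_simps)

lemma Flam_power_tail:
  fixes f h :: "complex \<Rightarrow> complex"
  assumes "h holomorphic_on ball 0 R" "\<forall>z\<in>ball 0 R. f z = z ^ p + z ^ N * h z"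
  obtains K where "K holomorphic_on ball 0 R"
    "\<forall>z\<in>ball 0 R. Flam lam f z = of_real (1 - lam + lam * p) * z ^ p + z ^ N * K z"
proof
  define K where
    "K z = of_real (1 - lam + lam * N) * h z + of_real lam * z * deriv h z" for z
  show "K holomorphic_on ball 0 R"
    unfolding K_def using assms(1) by (intro holomorphic_intros holomorphic_deriv) auto
  have "Flam lam f z = of_real (1 - lam + lam * p) * z ^ p + z ^ N * K z"
    if z: "z \<in> ball 0 R" for z
  proof -
    have "((\<lambda>z. z ^ p + z ^ N * h z) has_field_derivative
           of_nat p * z ^ (p - 1) + (of_nat N * z ^ (N - 1) * h z + z ^ N * deriv h z)) (at z)"
      using holomorphic_derivI[OF assms(1) _ z] by (auto intro!: derivative_eq_intros)
    hence "deriv f z = of_nat p * z ^ (p - 1) + (of_nat N * z ^ (N - 1) * h z + z ^ N * deriv h z)"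
      by (intro DERIV_imp_deriv, rule has_field_derivative_transform_within_open[where S = "ball 0 R"])
         (use z assms(2) in auto)
    hence "z * deriv f z = z * (of_nat p * z ^ (p - 1)) + z * (of_nat N * z ^ (N - 1)) * h z
                           + z * z ^ N * deriv h z"
      by (simp add: algebra_simps)
    also have "\<dots> = of_nat p * z ^ p + of_nat N * z ^ N * h z + z * z ^ N * deriv h z"
      by (simp only: mult_of_nat_power_pred)
    finally have
      "z * deriv f z = of_nat p * z ^ p + of_nat N * z ^ N * h z + z * z ^ N * deriv h z" .
    thus ?thesis
      unfolding Flam_def K_def mult.assoc[of "of_real lam" z] using assms(2) z
      by (simp add: algebra_simps)
  qed
  thus "\<forall>z\<in>ball 0 R. Flam lam f z = of_real (1 - lam + lam * p) * z ^ p + z ^ N * K z" by blast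
qed

lemma logderiv_power_tail:
  fixes F K :: "complex \<Rightarrow> complex" and c :: complex
  assumes "K holomorphic_on ball 0 R" "c \<noteq> 0" "n \<ge> 1"
    and "\<forall>z\<in>ball 0 R. F z = c * z ^ p + z ^ (p + n) * K z"
    and "\<forall>z\<in>ball 0 R - {0}. F z \<noteq> 0"
  obtains G where "G holomorphic_on ball 0 R"
    "\<forall>z\<in>ball 0 R - {0}. z * deriv F z / F z - of_nat p = z ^ n * G z"
proof
  define \<Phi> where "\<Phi> z = c + z ^ n * K z" for z
  define G where "G z = (of_nat n * K z + z * deriv K z) / \<Phi> z" for z
  have F_eq: "F z = z ^ p * \<Phi> z" if "z \<in> ball 0 R" for z
    using assms(4) that unfolding \<Phi>_def by (simp add: algebra_simps power_add)
  have \<Phi>_nonzero: "\<Phi> z \<noteq> 0" if z: "z \<in> ball 0 R" for z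
  proof (cases "z = 0")
    case True
    thus ?thesis using assms(2,3) unfolding \<Phi>_def by (simp add: power_0_left)
  next
    case False
    thus ?thesis using assms(5) F_eq z by auto
  qed
  show "G holomorphic_on ball 0 R"
    unfolding G_def using assms(1) \<Phi>_nonzero unfolding \<Phi>_def
    by (intro holomorphic_intros holomorphic_deriv) auto
  show "\<forall>z\<in>ball 0 R - {0}. z * deriv F z / F z - of_nat p = z ^ n * G z"
  proof
    fix z :: complex assume z: "z \<in> ball 0 R - {0}"
    have "((\<lambda>z. z ^ p * (c + z ^ n * K z)) has_field_derivative
           of_nat p * z ^ (p - 1) * \<Phi> z + z ^ p * (of_nat n * z ^ (n - 1) * K z + z ^ n * deriv K z))
          (at z)"
      using holomorphic_derivI[OF assms(1) _ ] z unfolding \<Phi>_def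
      by (auto intro!: derivative_eq_intros)
    hence "deriv F z =
        of_nat p * z ^ (p - 1) * \<Phi> z + z ^ p * (of_nat n * z ^ (n - 1) * K z + z ^ n * deriv K z)"
      by (intro DERIV_imp_deriv, rule has_field_derivative_transform_within_open[where S = "ball 0 R"])
         (use z F_eq in \<open>auto simp: \<Phi>_def\<close>)
    hence "z * deriv F z = z * (of_nat p * z ^ (p - 1)) * \<Phi> z
                           + z ^ p * (z * (of_nat n * z ^ (n - 1)) * K z + z * z ^ n * deriv K z)"
      by (simp add: algebra_simps)
    also have "\<dots> = z ^ p * (of_nat p * \<Phi> z + z ^ n * (of_nat n * K z + z * deriv K z))"
      unfolding mult_of_nat_power_pred by (simp add: algebra_simps)
    finally show "z * deriv F z / F z - of_nat p = z ^ n * G z"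
      unfolding F_eq[OF DiffD1[OF z]] G_def using \<Phi>_nonzero z by (auto simp: field_simps)
  qed
qed

lemma logderiv_Flam_power_tail:
  fixes f :: "complex \<Rightarrow> complex" and a :: "nat \<Rightarrow> complex"
  assumes "n \<ge> 1" "p \<ge> 1" "0 \<le> lam"
    and "\<forall>z\<in>ball 0 R. (\<lambda>k. if k \<ge> p + n then a k * z ^ k else 0) sums (f z - z ^ p)"
    and "\<forall>z\<in>ball 0 R - {0}. Flam lam f z \<noteq> 0"
  obtains G where "G holomorphic_on ball 0 R"
    "\<forall>z\<in>ball 0 R - {0}. z * deriv (Flam lam f) z / Flam lam f z - of_nat p = z ^ n * G z"
proof -
  obtain h where h_hol: "h holomorphic_on ball 0 R"
    and "\<forall>z\<in>ball 0 R. f z - z ^ p = z ^ (p + n) * h z"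
    using power_series_tail_factor[OF assms(4)] by blast
  hence "\<forall>z\<in>ball 0 R. f z = z ^ p + z ^ (p + n) * h z" by (simp add: diff_eq_eq)
  then obtain K where K_hol: "K holomorphic_on ball 0 R"
    and "\<forall>z\<in>ball 0 R. Flam lam f z = of_real (1 - lam + lam * p) * z ^ p + z ^ (p + n) * K z"
    using Flam_power_tail[OF h_hol] by blast
  moreover have "1 - lam + lam * p \<noteq> 0"
    using assms(2,3) mult_left_mono[of 1 p lam] by simp
  hence "complex_of_real (1 - lam + lam * p) \<noteq> 0" by (metis of_real_eq_0_iff)
  ultimately show thesis
    using logderiv_power_tail[OF K_hol _ assms(1) _ assms(5)] that by blast
qed

lemma first_point_norm_reaches:
  fixes w :: "complex \<Rightarrow> complex"
  assumes "continuous_on (cball 0 (cmod z1)) w" "cmod (w 0) < c" "c \<le> cmod (w z1)"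
  obtains z0 where "cmod z0 \<le> cmod z1" "cmod (w z0) = c"
    "\<And>z. cmod z \<le> cmod z0 \<Longrightarrow> cmod (w z) \<le> c"
proof -
  define S where "S = {z \<in> cball 0 (cmod z1). c \<le> cmod (w z)}"
  have "closed S"
    unfolding S_def using assms(1)
    by (intro continuous_on_closed_Collect_le) (auto intro!: continuous_intros)
  moreover have "S \<subseteq> cball 0 (cmod z1)" unfolding S_def by blast
  ultimately have "compact S" by (meson bounded_cball bounded_subset compact_eq_bounded_closed)
  moreover have "z1 \<in> S" using assms(3) unfolding S_def by simp
  ultimately obtain z0 where z0: "z0 \<in> S" and min: "\<And>z. z \<in> S \<Longrightarrow> cmod z0 \<le> cmod z"
    using continuous_attains_inf[of S norm] by (auto intro: continuous_intros)
  have "z0 \<noteq> 0" using z0 assms(2) unfolding S_def by auto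
  have inside: "cmod (w z) \<le> c" if "cmod z < cmod z0" for z
    using min[of z] that z0 unfolding S_def by force
  \<comment> \<open>pass from the open disc to its closure by continuity\<close>
  have "cball 0 (cmod z0) \<subseteq> cball 0 (cmod z1)" using z0 unfolding S_def by auto
  hence "closed {z \<in> cball 0 (cmod z0). cmod (w z) \<le> c}"
    using continuous_on_subset[OF assms(1)]
    by (intro continuous_on_closed_Collect_le) (auto intro!: continuous_intros)
  moreover have "ball 0 (cmod z0) \<subseteq> {z \<in> cball 0 (cmod z0). cmod (w z) \<le> c}"
    using inside by auto
  ultimately have "closure (ball 0 (cmod z0)) \<subseteq> {z \<in> cball 0 (cmod z0). cmod (w z) \<le> c}"
    by (rule closure_minimal[rotated])
  hence closed_disc: "cmod (w z) \<le> c" if "cmod z \<le> cmod z0" for z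
    using that \<open>z0 \<noteq> 0\<close> by auto
  show thesis
    using that[of z0] closed_disc z0 unfolding S_def by force
qed

lemma norm_power_mult_le_on_cball:
  fixes G :: "complex \<Rightarrow> complex"
  assumes "G holomorphic_on ball 0 R" "0 < r" "r < R"
    and "\<And>u. cmod u = r \<Longrightarrow> cmod (u ^ n * G u) \<le> B" and "cmod z \<le> r"
  shows "cmod (z ^ n * G z) \<le> (cmod z / r) ^ n * B"
proof -
  have "cball 0 r \<subseteq> ball 0 R" using assms(3) by auto
  hence G_cont: "continuous_on (cball 0 r) G"
    using assms(1) by (meson holomorphic_on_imp_continuous_on holomorphic_on_subset)
  have "cmod (G z) \<le> B / r ^ n"
  proof (rule maximum_modulus_frontier[of G "cball 0 r"])
    show "G holomorphic_on interior (cball 0 r)"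
      using assms(1,3) by (auto intro: holomorphic_on_subset)
    show "continuous_on (closure (cball 0 r)) G" using G_cont by simp
    fix u :: complex assume "u \<in> frontier (cball 0 r)"
    hence "cmod u = r" using assms(2) by simp
    thus "cmod (G u) \<le> B / r ^ n"
      using assms(2) assms(4)[of u] by (simp add: norm_mult norm_power field_simps)
  qed (use assms(5) in auto)
  hence "cmod z ^ n * cmod (G z) \<le> cmod z ^ n * (B / r ^ n)" by (rule mult_left_mono) simp
  thus ?thesis by (simp add: norm_mult norm_power power_divide)
qed

lemma Im_deriv_eq_0_at_circle_max:
  fixes w :: "complex \<Rightarrow> complex"
  assumes "(w has_field_derivative w') (at z0)"
    and "\<And>t::real. Re (c * w (z0 * exp (\<i> * t))) \<le> Re (c * w z0)"
  shows "Im (c * z0 * w') = 0"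
proof -
  have "((\<lambda>s. c * w (z0 * exp (\<i> * s))) has_field_derivative c * (w' * (z0 * \<i>)))
          (at (of_real 0))"
  proof (rule DERIV_cmult)
    have circle: "((\<lambda>s. z0 * exp (\<i> * s)) has_field_derivative z0 * \<i>) (at 0)"
      by (auto intro!: derivative_eq_intros)
    have "(w has_field_derivative w') (at ((\<lambda>s. z0 * exp (\<i> * s)) 0))"
      using assms(1) by simp
    from DERIV_chain2[OF this circle]
    show "((\<lambda>s. w (z0 * exp (\<i> * s))) has_field_derivative w' * (z0 * \<i>)) (at (of_real 0))"
      by simp
  qed
  from has_field_derivative_Re[OF has_vector_derivative_real_field[OF this]]
  have "((\<lambda>t. Re (c * w (z0 * exp (\<i> * of_real t)))) has_real_derivative
           Re (c * (w' * (z0 * \<i>)))) (at 0)"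
    by simp
  hence "Re (c * (w' * (z0 * \<i>))) = 0"
    by (rule DERIV_local_max[OF _ zero_less_one]) (use assms(2) in auto)
  thus ?thesis by (simp add: algebra_simps)
qed

lemma Re_deriv_ge_at_radial_max:
  fixes w :: "complex \<Rightarrow> complex"
  assumes "(w has_field_derivative w') (at z0)"
    and "\<And>t. 0 \<le> t \<Longrightarrow> t \<le> 1 \<Longrightarrow> Re (c * w (of_real t * z0)) \<le> t ^ n * Re (c * w z0)"
  shows "real n * Re (c * w z0) \<le> Re (c * z0 * w')"
proof (rule ccontr)
  assume neg: "\<not> real n * Re (c * w z0) \<le> Re (c * z0 * w')"
  define g where "g t = Re (c * w (of_real t * z0)) - t ^ n * Re (c * w z0)" for t
  have "((\<lambda>s. c * w (s * z0)) has_field_derivative c * (w' * z0)) (at (of_real 1))"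
  proof (rule DERIV_cmult)
    have radius: "((\<lambda>s. s * z0) has_field_derivative z0) (at 1)"
      by (auto intro!: derivative_eq_intros)
    have "(w has_field_derivative w') (at ((\<lambda>s. s * z0) 1))"
      using assms(1) by simp
    from DERIV_chain2[OF this radius]
    show "((\<lambda>s. w (s * z0)) has_field_derivative w' * z0) (at (of_real 1))"
      by simp
  qed
  from has_field_derivative_Re[OF has_vector_derivative_real_field[OF this]]
  have "((\<lambda>t. Re (c * w (of_real t * z0))) has_real_derivative Re (c * z0 * w')) (at 1)"
    by (simp add: algebra_simps)
  hence "(g has_real_derivative Re (c * z0 * w') - real n * Re (c * w z0)) (at 1)"
    unfolding g_def using DERIV_diff[OF _ DERIV_cmult_right[OF DERIV_pow[of n 1]]] by simp
  then obtain d where "d > 0" and d: "\<And>h. 0 < h \<Longrightarrow> h < d \<Longrightarrow> g 1 < g (1 - h)"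
    using DERIV_neg_dec_left neg by (metis diff_less_0_iff_less not_le_imp_less)
  define h where "h = min (d / 2) (1 / 2)"
  have "0 < h" "h < d" "h \<le> 1" using \<open>d > 0\<close> unfolding h_def by auto
  hence "g (1 - h) \<le> 0" using assms(2)[of "1 - h"] unfolding g_def by simp
  moreover have "g 1 = 0" unfolding g_def by simp
  ultimately show False using d[OF \<open>0 < h\<close> \<open>h < d\<close>] by linarith
qed

lemma Jack_lemma:
  fixes G :: "complex \<Rightarrow> complex"
  assumes "G holomorphic_on ball 0 R" "n \<ge> 1" "z1 \<in> ball 0 R" "1 \<le> cmod (z1 ^ n * G z1)"
  obtains z0 m where "z0 \<in> ball 0 R - {0}" "cmod (z0 ^ n * G z0) = 1" "real n \<le> m"
    "z0 * deriv (\<lambda>z. z ^ n * G z) z0 = of_real m * (z0 ^ n * G z0)"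
proof -
  define w where "w = (\<lambda>z. z ^ n * G z)"
  have w_hol: "w holomorphic_on ball 0 R" unfolding w_def using assms(1) by (intro holomorphic_intros)
  have "cball 0 (cmod z1) \<subseteq> ball 0 R" using assms(3) by auto
  hence "continuous_on (cball 0 (cmod z1)) w"
    using w_hol by (meson holomorphic_on_imp_continuous_on holomorphic_on_subset)
  moreover have "cmod (w 0) < 1" using assms(2) unfolding w_def by (simp add: power_0_left)
  moreover have "1 \<le> cmod (w z1)" using assms(4) unfolding w_def by simp
  ultimately obtain z0 where "cmod z0 \<le> cmod z1" and W_norm: "cmod (w z0) = 1"
    and le_1: "\<And>z. cmod z \<le> cmod z0 \<Longrightarrow> cmod (w z) \<le> 1"
    by (rule first_point_norm_reaches) auto
  have "z0 \<noteq> 0" using W_norm assms(2) unfolding w_def by (auto simp: power_0_left)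
  have z0_in: "z0 \<in> ball 0 R" using \<open>cmod z0 \<le> cmod z1\<close> assms(3) by auto
  have w_deriv: "(w has_field_derivative deriv w z0) (at z0)"
    using holomorphic_derivI[OF w_hol _ z0_in] by simp
  define W where "W = w z0"
  have W_conj: "cnj W * W = 1"
    using complex_norm_square[of W] W_norm unfolding W_def by (simp add: mult.commute)
  have Re_le: "Re (cnj W * w z) \<le> cmod (w z)" for z
    using complex_Re_le_cmod[of "cnj W * w z"] W_norm unfolding W_def by (simp add: norm_mult)
  \<comment> \<open>\<open>Re (cnj W * w)\<close> is maximal at \<open>z0\<close> on the circle \<open>|z| = |z0|\<close>, and by the Schwarz-type
      bound it stays below \<open>t ^ n\<close> along the radius\<close>
  have "real n * Re (cnj W * w z0) \<le> Re (cnj W * z0 * deriv w z0)"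
  proof (rule Re_deriv_ge_at_radial_max[OF w_deriv])
    fix t :: real assume t: "0 \<le> t" "t \<le> 1"
    have "cmod (w (of_real t * z0)) \<le> (cmod (of_real t * z0) / cmod z0) ^ n * 1"
      unfolding w_def
      by (rule norm_power_mult_le_on_cball[OF assms(1)])
         (use \<open>z0 \<noteq> 0\<close> z0_in t le_1 in \<open>auto simp: w_def norm_mult mult_left_le_one_le\<close>)
    also have "\<dots> = t ^ n" using \<open>z0 \<noteq> 0\<close> t by (simp add: norm_mult)
    finally show "Re (cnj W * w (of_real t * z0)) \<le> t ^ n * Re (cnj W * w z0)"
      using Re_le[of "of_real t * z0"] W_conj unfolding W_def by simp
  qed
  hence Re_ge: "real n \<le> Re (cnj W * z0 * deriv w z0)" using W_conj unfolding W_def by simp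
  have Im_eq: "Im (cnj W * z0 * deriv w z0) = 0"
  proof (rule Im_deriv_eq_0_at_circle_max[OF w_deriv])
    fix t :: real
    show "Re (cnj W * w (z0 * exp (\<i> * t))) \<le> Re (cnj W * w z0)"
      using Re_le[of "z0 * exp (\<i> * t)"] le_1[of "z0 * exp (\<i> * t)"] W_conj
      unfolding W_def by (simp add: norm_mult)
  qed
  define m where "m = Re (cnj W * z0 * deriv w z0)"
  have "cnj W * (z0 * deriv w z0) = of_real m"
    using Im_eq unfolding m_def by (simp add: complex_eq_iff mult.assoc)
  hence "z0 * deriv w z0 = of_real m * W"
    using W_conj by (metis mult.assoc mult.commute mult.left_neutral)
  thus thesis
    using that[of z0 m] \<open>z0 \<noteq> 0\<close> z0_in W_norm Re_ge unfolding m_def W_def w_def by simp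
qed

lemma zderiv_logderiv:
  fixes F :: "complex \<Rightarrow> complex"
  assumes "F holomorphic_on S" "open S" "z \<in> S" "F z \<noteq> 0" "deriv F z \<noteq> 0"
  shows "z * deriv (\<lambda>z. z * deriv F z / F z) z =
         z * deriv F z / F z * (- (z * deriv F z / F z) + 1 + z * deriv (deriv F) z / deriv F z)"
proof -
  have "(F has_field_derivative deriv F z) (at z)"
    using holomorphic_derivI[OF assms(1-3)] .
  moreover have "(deriv F has_field_derivative deriv (deriv F) z) (at z)"
    using holomorphic_derivI[OF holomorphic_deriv[OF assms(1,2)] assms(2,3)] .
  ultimately have "((\<lambda>z. z * deriv F z / F z) has_field_derivative
      ((deriv F z + z * deriv (deriv F) z) * F z - z * deriv F z * deriv F z) / (F z * F z)) (at z)"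
    using assms(4) by (auto intro!: derivative_eq_intros)
  hence deriv_eq: "deriv (\<lambda>z. z * deriv F z / F z) z =
      ((deriv F z + z * deriv (deriv F) z) * F z - z * deriv F z * deriv F z) / (F z * F z)"
    by (rule DERIV_imp_deriv)
  show ?thesis unfolding deriv_eq using assms(4,5) by (simp add: field_simps)
qed

lemma logderiv_expression_eq:
  fixes F w :: "complex \<Rightarrow> complex" and p M m :: real
  assumes "F holomorphic_on S" "w holomorphic_on S" "open S" "z0 \<in> S" "z0 \<noteq> 0"
    and "F z0 \<noteq> 0" "deriv F z0 \<noteq> 0"
    and "\<forall>z\<in>S. z * deriv F z / F z = of_real p + of_real M * w z"
    and "z0 * deriv w z0 = of_real m * w z0"
  shows "- (z0 * deriv F z0 / F z0) + 1 + z0 * deriv (deriv F) z0 / deriv F z0 =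
         of_real M * of_real m * w z0 / (of_real p + of_real M * w z0)"
proof -
  define Q where "Q = (\<lambda>z. z * deriv F z / F z)"
  have "((\<lambda>z. of_real p + of_real M * w z) has_field_derivative of_real M * deriv w z0) (at z0)"
    using holomorphic_derivI[OF assms(2-4)] by (auto intro!: derivative_eq_intros)
  hence "(Q has_field_derivative of_real M * deriv w z0) (at z0)"
    by (rule has_field_derivative_transform_within_open[OF _ assms(3,4)])
       (use assms(8) in \<open>simp add: Q_def\<close>)
  hence "z0 * deriv Q z0 = of_real M * of_real m * w z0"
    using assms(9) by (simp add: DERIV_imp_deriv algebra_simps)
  moreover have "z0 * deriv Q z0 =
      Q z0 * (- (Q z0) + 1 + z0 * deriv (deriv F) z0 / deriv F z0)"
    using zderiv_logderiv[OF assms(1,3,4,6,7)] unfolding Q_def .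
  moreover have "Q z0 = of_real p + of_real M * w z0" using assms(4,8) unfolding Q_def by simp
  moreover have "Q z0 \<noteq> 0" using assms(5-7) unfolding Q_def by simp
  ultimately show ?thesis unfolding Q_def by (simp add: nonzero_eq_divide_eq mult.commute)
qed

lemma Re_quotient_unimodular_ge:
  fixes W :: complex and M m p n :: real
  assumes "cmod W = 1" "0 \<le> p" "p \<le> M" "0 < M" "n \<le> m" "0 \<le> n"
    and "of_real p + of_real M * W \<noteq> 0"
  shows "n * M / (M + p) \<le> Re (of_real M * of_real m * W / (of_real p + of_real M * W))"
proof -
  define a where "a = Re W"
  have ab: "a\<^sup>2 + (Im W)\<^sup>2 = 1"
    using assms(1) unfolding a_def cmod_def by (metis real_sqrt_eq_1_iff)
  have "a \<le> 1" using abs_Re_le_cmod[of W] assms(1) unfolding a_def by linarith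
  define D where "D = (cmod (of_real p + of_real M * W))\<^sup>2"
  have D_pos: "0 < D" using assms(7) unfolding D_def by simp
  have D_eq: "D = p\<^sup>2 + 2 * p * M * a + M\<^sup>2"
    unfolding D_def cmod_power2 a_def using ab[unfolded a_def]
    by (simp add: power2_eq_square algebra_simps) (metis distrib_left mult.assoc mult_1_right)
  have Re_eq:
    "Re (of_real M * of_real m * W / (of_real p + of_real M * W)) = M * m * (p * a + M) / D"
    unfolding Re_divide D_def cmod_power2 a_def using ab[unfolded a_def]
    by (simp add: power2_eq_square algebra_simps) (metis distrib_left mult.assoc mult_1_right)
  \<comment> \<open>the difference of the two sides of the next inequality is \<open>p (M - p) (1 - Re W)\<close>\<close>
  have "D \<le> (p * a + M) * (M + p)"
    using mult_nonneg_nonneg[OF mult_nonneg_nonneg[OF \<open>0 \<le> p\<close>, of "M - p"], of "1 - a"]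
      assms(3) \<open>a \<le> 1\<close> unfolding D_eq by (simp add: power2_eq_square algebra_simps)
  hence "1 / (M + p) \<le> (p * a + M) / D" using D_pos assms by (simp add: field_simps)
  hence "M * n * (1 / (M + p)) \<le> M * m * ((p * a + M) / D)"
    using assms by (intro mult_mono) (auto intro: mult_left_mono)
  thus ?thesis unfolding Re_eq by (simp add: mult.commute)
qed

lemma norm_logderiv_diff_less:
  fixes F G :: "complex \<Rightarrow> complex" and p M :: real
  assumes "F holomorphic_on ball 0 1" "G holomorphic_on ball 0 1" "n \<ge> 1"
    and "0 \<le> p" "p \<le> M" "0 < M"
    and F_nonzero: "\<forall>z\<in>ball 0 1 - {0}. F z \<noteq> 0 \<and> deriv F z \<noteq> 0"
    and "\<forall>z\<in>ball 0 1 - {0}. z * deriv F z / F z - of_real p = z ^ n * G z"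
    and "\<forall>z\<in>ball 0 1 - {0}.
           Re (- (z * deriv F z / F z) + 1 + z * deriv (deriv F) z / deriv F z) < n * M / (M + p)"
  shows "\<forall>z\<in>ball 0 1 - {0}. cmod (z * deriv F z / F z - of_real p) < M"
proof (rule ccontr)
  \<comment> \<open>normalise so that the claim becomes \<open>|w| < 1\<close>, with \<open>w\<close> vanishing to order \<open>n\<close> at 0\<close>
  define w where "w = (\<lambda>z. z ^ n * (G z / of_real M))"
  have logderiv_eq: "\<forall>z\<in>ball 0 1 - {0}. z * deriv F z / F z = of_real p + of_real M * w z"
    using assms(6,8) unfolding w_def by (simp add: diff_eq_eq)
  assume "\<not> ?thesis"
  then obtain z1 where z1: "z1 \<in> ball 0 1 - {0}"
    "\<not> cmod (z1 * deriv F z1 / F z1 - of_real p) < M"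
    by blast
  hence "1 \<le> cmod (z1 ^ n * (G z1 / of_real M))"
    using logderiv_eq assms(6) unfolding w_def by (simp add: norm_mult norm_divide)
  moreover have "(\<lambda>z. G z / of_real M) holomorphic_on ball 0 1"
    using assms(2,6) by (auto intro!: holomorphic_intros)
  ultimately obtain z0 m where z0: "z0 \<in> ball 0 1 - {0}" and W_norm: "cmod (w z0) = 1"
    and "real n \<le> m" and w_deriv: "z0 * deriv w z0 = of_real m * w z0"
    using Jack_lemma[OF _ assms(3)] z1(1) unfolding w_def by blast
  have "w holomorphic_on ball 0 1"
    unfolding w_def using assms(2,6) by (auto intro!: holomorphic_intros)
  hence "- (z0 * deriv F z0 / F z0) + 1 + z0 * deriv (deriv F) z0 / deriv F z0 =
      of_real M * of_real m * w z0 / (of_real p + of_real M * w z0)"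
    using assms(1) z0 F_nonzero logderiv_eq w_deriv
    by (intro logderiv_expression_eq[where S = "ball 0 1 - {0}"]) (auto elim: holomorphic_on_subset)
  moreover have "of_real p + of_real M * w z0 \<noteq> 0"
    using logderiv_eq[rule_format, OF z0] F_nonzero z0 by auto
  ultimately have "n * M / (M + p) \<le>
      Re (- (z0 * deriv F z0 / F z0) + 1 + z0 * deriv (deriv F) z0 / deriv F z0)"
    using Re_quotient_unimodular_ge[OF W_norm] assms(4-6) \<open>real n \<le> m\<close> by simp
  thus False using assms(9)[rule_format, OF z0] by linarith
qed

theorem corollary3p11:
  fixes f :: "complex \<Rightarrow> complex" and n p :: nat and lam M :: real
  assumes "n \<ge> 1" and "p \<ge> 1"
    and "0 \<le> lam" and "lam \<le> 1"
    and "f holomorphic_on ball 0 1"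
    and "\<exists>a :: nat \<Rightarrow> complex. \<forall>z\<in>ball 0 1.
           (\<lambda>k. if k \<ge> p + n then a k * z ^ k else 0) sums (f z - z ^ p)"
    and "\<forall>z\<in>ball 0 1 - {0}. Flam lam f z * deriv (Flam lam f) z \<noteq> 0"
    and "M \<ge> real p"
    and "\<forall>z\<in>ball 0 1 - {0}.
           Re (- (z * deriv (Flam lam f) z / Flam lam f z) + 1
               + z * deriv (deriv (Flam lam f)) z / deriv (Flam lam f) z)
           < real n * M / (M + real p)"
  shows "\<forall>z\<in>ball 0 1 - {0}.
           cmod (z * deriv (Flam lam f) z / Flam lam f z - of_nat p) < M"
proof -
  have F_nonzero: "\<forall>z\<in>ball 0 1 - {0}. Flam lam f z \<noteq> 0 \<and> deriv (Flam lam f) z \<noteq> 0"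
    using assms(7) by simp
  obtain a where "\<forall>z\<in>ball 0 1. (\<lambda>k. if k \<ge> p + n then a k * z ^ k else 0) sums (f z - z ^ p)"
    using assms(6) by blast
  then obtain G where "G holomorphic_on ball 0 1"
    and "\<forall>z\<in>ball 0 1 - {0}. z * deriv (Flam lam f) z / Flam lam f z - of_nat p = z ^ n * G z"
    using logderiv_Flam_power_tail[OF assms(1-3)] F_nonzero by blast
  moreover have "Flam lam f holomorphic_on ball 0 1"
    unfolding Flam_def using assms(5) by (intro holomorphic_intros holomorphic_deriv) auto
  ultimately show ?thesis
    using norm_logderiv_diff_less[of "Flam lam f" G n "real p" M] assms(1,2,8,9) F_nonzero by simp
qed

end
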